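(* Let $\nu,\mu\in\Lambda(n;r)$. Then $\xi_\nu J_R(n,r)\xi_\mu=0$ unless $\nu\triangleright\mu$. If $\nu\triangleright\mu$, then $\{\xi_\omega:\omega\in\Lambda^1(n,n;r),\ \omega^1=\mu,\ \omega^2=\nu\}$ is an $R$-basis of the free $R$-module $\xi_\nu J_R(n,r)\xi_\mu$.
   Context: $R$ commutative ring with identity, $n,r$ positive integers. $\Lambda(n;r)$: compositions $(\lambda_1,\dots,\lambda_n)\in\mathbb{N}_0^n$ with sum $r$. $\Lambda(n,n;r)$: $n\times n$ nonnegative integer matrices with total sum $r$; $(\omega^1)_t=\sum_s\omega_{st}$, $(\omega^2)_s=\sum_t\omega_{st}$. For $i,j\in I(n,r)=\{1,\dots,n\}^r$, $\operatorname{wt}(i,j)_{st}=\#\{q:i_q=s,j_q=t\}$, $(i,j)\in\omega$ means $\operatorname{wt}(i,j)=\omega$. $S_R(n,r)=\mathrm{End}_{R\Sigma_r}((R^n)^{\otimes r})$ ($e_i\sigma=e_{i\sigma}$), with basis $\xi_\omega=\sum_{(i,j)\in\omega}e_{i,j}$ ($e_{i,j}e_k=\delta_{jk}e_i$); $\xi_\lambda:=\xi_{\mathrm{diag}(\lambda)}$ for $\lambda\in\Lambda(n;r)$. $\Lambda^1(n,n;r)$ is the set of upper triangular $\omega$ with $\sum_{k\le l}(l-k)\omega_{kl}\ge1$, and $J_R(n,r)$ is the $R$-span of $\{\xi_\omega:\omega\in\Lambda^1(n,n;r)\}$. Dominance: $\nu\trianglerighteq\mu$ if $\sum_{s=1}^t\nu_s\ge\sum_{s=1}^t\mu_s$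 for all $t$, and $\nu\triangleright\mu$ if $\nu\trianglerighteq\mu$ and $\nu\ne\mu$. *)

theory Defs
  imports "HOL-Combinatorics.Permutations"
begin

text \<open>Multi-indices I(n,r): lists of length r with entries in {1..n}
  (position q, 0-based, holds the entry i_(q+1)).\<close>
definition Iset :: "nat \<Rightarrow> nat \<Rightarrow> nat list set" where
  "Iset n r = {i. length i = r \<and> set i \<subseteq> {1..n}}"

definition comps :: "nat \<Rightarrow> nat \<Rightarrow> (nat \<Rightarrow> nat) set" where
  "comps n r = {l. (\<forall>s. s \<notin> {1..n} \<longrightarrow> l s = 0) \<and> (\<Sum>s=1..n. l s) = r}"

definition mats :: "nat \<Rightarrow> nat \<Rightarrow> (nat \<Rightarrow> nat \<Rightarrow> nat) set" where
  "mats n r = {w. (\<forall>s t. s \<notin> {1..n} \<or> t \<notin> {1..n} \<longrightarrow> w s t = 0)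
                 \<and> (\<Sum>s=1..n. \<Sum>t=1..n. w s t) = r}"

definition omega1 :: "nat \<Rightarrow> (nat \<Rightarrow> nat \<Rightarrow> nat) \<Rightarrow> nat \<Rightarrow> nat" where
  "omega1 n w t = (\<Sum>s=1..n. w s t)"

definition omega2 :: "nat \<Rightarrow> (nat \<Rightarrow> nat \<Rightarrow> nat) \<Rightarrow> nat \<Rightarrow> nat" where
  "omega2 n w s = (\<Sum>t=1..n. w s t)"

definition wt :: "nat list \<Rightarrow> nat list \<Rightarrow> nat \<Rightarrow> nat \<Rightarrow> nat" where
  "wt i j s t = card {q. q < length i \<and> i ! q = s \<and> j ! q = t}"

definition diagm :: "(nat \<Rightarrow> nat) \<Rightarrow> nat \<Rightarrow> nat \<Rightarrow> nat" where
  "diagm l s t = (if s = t then l s else 0)"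

definition Lambda1 :: "nat \<Rightarrow> nat \<Rightarrow> (nat \<Rightarrow> nat \<Rightarrow> nat) set" where
  "Lambda1 n r = {w \<in> mats n r. (\<forall>k l. l < k \<longrightarrow> w k l = 0)
       \<and> (\<Sum>k=1..n. \<Sum>l=1..n. if k \<le> l then (l - k) * w k l else 0) \<ge> 1}"

text \<open>Endomorphisms of (R^n)^{\<otimes> r} are represented by their matrices w.r.t. the
  basis e_i, i \<in> I(n,r) (entries outside I(n,r) x I(n,r) are zero):
  A e_j = sum_i A i j e_i; composition is matrix multiplication.\<close>
type_synonym 'a smat = "nat list \<Rightarrow> nat list \<Rightarrow> 'a"

definition mmul :: "nat \<Rightarrow> nat \<Rightarrow> 'a::comm_ring_1 smat \<Rightarrow> 'a smat \<Rightarrow> 'a smat" where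
  "mmul n r A B = (\<lambda>i k. \<Sum>j\<in>Iset n r. A i j * B j k)"

text \<open>S_R(n,r): endomorphisms commuting with the place-permutation action
  e_i sigma = e_(i sigma).\<close>
definition schur :: "nat \<Rightarrow> nat \<Rightarrow> ('a::comm_ring_1) smat set" where
  "schur n r = {A. (\<forall>i j. i \<notin> Iset n r \<or> j \<notin> Iset n r \<longrightarrow> A i j = 0) \<and>
     (\<forall>\<sigma> i j. \<sigma> permutes {..<r} \<longrightarrow> i \<in> Iset n r \<longrightarrow> j \<in> Iset n r \<longrightarrow>
        A (map (\<lambda>q. i ! \<sigma> q) [0..<r]) (map (\<lambda>q. j ! \<sigma> q) [0..<r]) = A i j)}"

definition xi :: "nat \<Rightarrow> nat \<Rightarrow> (nat \<Rightarrow> nat \<Rightarrow> nat) \<Rightarrow> 'a::comm_ring_1 smat" where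
  "xi n r w = (\<lambda>i j. if i \<in> Iset n r \<and> j \<in> Iset n r \<and> wt i j = w then 1 else 0)"

definition xil :: "nat \<Rightarrow> nat \<Rightarrow> (nat \<Rightarrow> nat) \<Rightarrow> 'a::comm_ring_1 smat" where
  "xil n r l = xi n r (diagm l)"

definition Jset :: "nat \<Rightarrow> nat \<Rightarrow> ('a::comm_ring_1) smat set" where
  "Jset n r = {x. \<exists>c. x = (\<lambda>i j. \<Sum>w\<in>Lambda1 n r. c w * xi n r w i j)}"

definition dominates :: "nat \<Rightarrow> (nat \<Rightarrow> nat) \<Rightarrow> (nat \<Rightarrow> nat) \<Rightarrow> bool" where
  "dominates n a b = (\<forall>t\<in>{1..n}. (\<Sum>s=1..t. b s) \<le> (\<Sum>s=1..t. a s))"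

definition sdominates :: "nat \<Rightarrow> (nat \<Rightarrow> nat) \<Rightarrow> (nat \<Rightarrow> nat) \<Rightarrow> bool" where
  "sdominates n a b = (dominates n a b \<and> a \<noteq> b)"

definition is_basis :: "'b set \<Rightarrow> ('b \<Rightarrow> 'a::comm_ring_1 smat) \<Rightarrow> 'a smat set \<Rightarrow> bool" where
  "is_basis X f M =
     ((\<forall>w\<in>X. f w \<in> M)
      \<and> (\<forall>c. (\<lambda>i j. \<Sum>w\<in>X. c w * f w i j) = (\<lambda>i j. 0) \<longrightarrow> (\<forall>w\<in>X. c w = 0))
      \<and> (\<forall>x\<in>M. \<exists>c. x = (\<lambda>i j. \<Sum>w\<in>X. c w * f w i j)))"

end

theory Submission imports Defs begin

text \<open>Multiplying by \<open>\<xi>\<^sub>\<nu>\<close> on the left and \<open>\<xi>\<^sub>\<mu>\<close> on the right keeps exactly the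
  entries \<open>(i,j)\<close> with \<open>i\<close> of content \<open>\<nu>\<close> and \<open>j\<close> of content \<open>\<mu>\<close>; on \<open>\<xi>\<^sub>\<omega>\<close> this means
  \<open>\<omega>\<^sup>2 = \<nu>\<close> and \<open>\<omega>\<^sup>1 = \<mu>\<close>. So \<open>\<xi>\<^sub>\<nu> J \<xi>\<^sub>\<mu>\<close> is spanned by the \<open>\<xi>\<^sub>\<omega>\<close> with \<open>\<omega> \<in> \<Lambda>\<^sup>1(n,n;r)\<close>
  and these marginals, which are independent because every matrix of \<open>\<Lambda>(n,n;r)\<close> is
  some \<open>wt(i,j)\<close>. For an upper triangular \<open>\<omega>\<close> the first \<open>t\<close> row sums contain the
  \<open>t \<times> t\<close> corner, which is the first \<open>t\<close> column sums; an entry strictly above the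
  diagonal makes the inequality strict at its row, so such \<open>\<omega>\<close> exist only if \<open>\<nu> \<triangleright> \<mu>\<close>.\<close>

definition content :: "nat list \<Rightarrow> nat \<Rightarrow> nat" where
  "content i s = card {q. q < length i \<and> i ! q = s}"

definition xi_span :: "nat \<Rightarrow> nat \<Rightarrow> (nat \<Rightarrow> nat \<Rightarrow> nat) set \<Rightarrow> 'a::comm_ring_1 smat set" where
  "xi_span n r S = {x. \<exists>c. x = (\<lambda>i j. \<Sum>w\<in>S. c w * xi n r w i j)}"

lemma Jset_eq_xi_span: "Jset n r = xi_span n r (Lambda1 n r)"
  unfolding Jset_def xi_span_def ..

lemma finite_Iset: "finite (Iset n r)"
proof -
  have "Iset n r = {xs. set xs \<subseteq> {1..n} \<and> length xs = r}" unfolding Iset_def by auto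
  thus ?thesis using finite_lists_length_eq[of "{1..n}" r] by simp
qed

lemma Iset_nth: "i \<in> Iset n r \<Longrightarrow> q < r \<Longrightarrow> i ! q \<in> {1..n}"
  unfolding Iset_def by (auto intro: nth_mem)

lemma mats_entry_le:
  assumes "w \<in> mats n r"
  shows "w s t \<le> r"
proof (cases "s \<in> {1..n} \<and> t \<in> {1..n}")
  case True
  have "w s t \<le> (\<Sum>t=1..n. w s t)" using True by (intro member_le_sum) auto
  also have "\<dots> \<le> (\<Sum>s=1..n. \<Sum>t=1..n. w s t)"
    using True by (intro member_le_sum[where f="\<lambda>s. \<Sum>t=1..n. w s t"]) auto
  finally show ?thesis using assms unfolding mats_def by simp
next
  case False
  thus ?thesis using assms unfolding mats_def by auto
qed

lemma finite_mats: "finite (mats n r)"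
proof -
  let ?rows = "{f :: nat \<Rightarrow> nat. \<forall>t. (t \<in> {1..n} \<longrightarrow> f t \<in> {0..r}) \<and> (t \<notin> {1..n} \<longrightarrow> f t = 0)}"
  let ?M = "{w :: nat \<Rightarrow> nat \<Rightarrow> nat. \<forall>s. (s \<in> {1..n} \<longrightarrow> w s \<in> ?rows) \<and> (s \<notin> {1..n} \<longrightarrow> w s = (\<lambda>_. 0))}"
  have "finite ?rows" using finite_set_of_finite_funs[of "{1..n}" "{0..r}" 0] by simp
  hence "finite ?M" using finite_set_of_finite_funs[of "{1..n}" ?rows "\<lambda>_. 0"] by simp
  moreover have "mats n r \<subseteq> ?M"
  proof
    fix w assume w: "w \<in> mats n r"
    hence "w s t = 0" if "s \<notin> {1..n} \<or> t \<notin> {1..n}" for s t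
      using that unfolding mats_def by blast
    thus "w \<in> ?M" using mats_entry_le[OF w] by (auto simp: fun_eq_iff)
  qed
  ultimately show ?thesis by (rule finite_subset[rotated])
qed

lemma finite_Lambda1: "finite (Lambda1 n r)"
  using finite_mats[of n r] unfolding Lambda1_def by (rule finite_subset[rotated]) auto

lemma omega2_wt:
  assumes "i \<in> Iset n r" "j \<in> Iset n r"
  shows "omega2 n (wt i j) = content i"
proof
  fix s
  have len: "length i = r" "length j = r" using assms unfolding Iset_def by auto
  let ?S = "{q. q < r \<and> i ! q = s}"
  have "(\<Sum>t\<in>{1..n}. card {q \<in> ?S. j ! q = t}) = card ?S"
    using sum.group[of ?S "{1..n}" "\<lambda>q. j ! q" "\<lambda>_. 1::nat"] Iset_nth[OF assms(2)]
    by (simp add: image_subset_iff)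
  moreover have "{q \<in> ?S. j ! q = t} = {q. q < length i \<and> i ! q = s \<and> j ! q = t}" for t
    using len by auto
  ultimately show "omega2 n (wt i j) s = content i s"
    unfolding omega2_def wt_def content_def using len by simp
qed

lemma omega1_wt:
  assumes "i \<in> Iset n r" "j \<in> Iset n r"
  shows "omega1 n (wt i j) = content j"
proof
  fix t
  have len: "length i = r" "length j = r" using assms unfolding Iset_def by auto
  let ?S = "{q. q < r \<and> j ! q = t}"
  have "(\<Sum>s\<in>{1..n}. card {q \<in> ?S. i ! q = s}) = card ?S"
    using sum.group[of ?S "{1..n}" "\<lambda>q. i ! q" "\<lambda>_. 1::nat"] Iset_nth[OF assms(1)]
    by (simp add: image_subset_iff)
  moreover have "{q \<in> ?S. i ! q = s} = {q. q < length i \<and> i ! q = s \<and> j ! q = t}" for s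
    using len by auto
  ultimately show "omega1 n (wt i j) t = content j t"
    unfolding omega1_def wt_def content_def using len by simp
qed

lemma wt_surj_mats:
  assumes "w \<in> mats n r"
  shows "\<exists>i\<in>Iset n r. \<exists>j\<in>Iset n r. wt i j = w"
proof -
  have supp: "\<And>s t. s \<notin> {1..n} \<or> t \<notin> {1..n} \<Longrightarrow> w s t = 0"
    and total: "(\<Sum>s=1..n. \<Sum>t=1..n. w s t) = r"
    using assms unfolding mats_def by auto
  define ps where "ps = List.product [1..<n+1] [1..<n+1]"
  \<comment> \<open>list each pair \<open>(s,t)\<close> with multiplicity \<open>w s t\<close>; the two coordinates give \<open>i\<close> and \<open>j\<close>\<close>
  define L where "L = concat (map (\<lambda>p. replicate (w (fst p) (snd p)) p) ps)"
  have ps: "distinct ps" "set ps = {1..n} \<times> {1..n}"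
    unfolding ps_def by (simp_all add: distinct_product) auto
  have "length L = sum_list (map (\<lambda>p. w (fst p) (snd p)) ps)"
    unfolding L_def by (simp add: length_concat o_def)
  also have "\<dots> = (\<Sum>p\<in>{1..n} \<times> {1..n}. w (fst p) (snd p))"
    using ps by (simp add: sum_list_distinct_conv_sum_set)
  also have "\<dots> = r" using total by (simp add: sum.cartesian_product case_prod_beta)
  finally have len: "length L = r" .
  have mult: "length (filter (\<lambda>p. p = (s,t)) L) = w s t" for s t
  proof -
    have "length (filter (\<lambda>p. p = (s,t)) L) = sum_list (map (\<lambda>p. if p = (s,t) then w s t else 0) ps)"
      unfolding L_def
      by (simp add: filter_concat length_concat o_def filter_replicate if_distrib cong: if_cong)
    also have "\<dots> = (\<Sum>p\<in>{1..n} \<times> {1..n}. if p = (s,t) then w s t else 0)"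
      using ps by (simp add: sum_list_distinct_conv_sum_set)
    also have "\<dots> = w s t" using supp by auto
    finally show ?thesis .
  qed
  have "set L \<subseteq> set ps" unfolding L_def by auto
  hence "fst ` set L \<subseteq> {1..n}" "snd ` set L \<subseteq> {1..n}" using ps(2) by auto
  hence "map fst L \<in> Iset n r" "map snd L \<in> Iset n r"
    unfolding Iset_def using len by simp_all
  moreover have "wt (map fst L) (map snd L) = w"
  proof (intro ext)
    fix s t
    have "wt (map fst L) (map snd L) s t = card {q. q < length L \<and> L ! q = (s,t)}"
      unfolding wt_def by (intro arg_cong[where f=card]) (auto simp: prod_eq_iff)
    thus "wt (map fst L) (map snd L) s t = w s t"
      using mult[of s t] length_filter_conv_card[of "\<lambda>p. p = (s,t)" L] by simp
  qed
  ultimately show ?thesis by blast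
qed

lemma sum_omega1_upper_triangular:
  assumes "\<And>k l. l < k \<Longrightarrow> w k l = 0" "T \<le> n"
  shows "(\<Sum>t=1..T. omega1 n w t) = (\<Sum>s=1..T. \<Sum>t=1..T. w s t)"
proof -
  have "(\<Sum>t=1..T. omega1 n w t) = (\<Sum>t=1..T. \<Sum>s=1..T. w s t)"
    unfolding omega1_def using assms by (intro sum.cong refl sum.mono_neutral_right) auto
  also have "\<dots> = (\<Sum>s=1..T. \<Sum>t=1..T. w s t)" by (rule sum.swap)
  finally show ?thesis .
qed

lemma sum_corner_le_sum_omega2:
  assumes "T \<le> n"
  shows "(\<Sum>s=1..T. \<Sum>t=1..T. w s t) \<le> (\<Sum>s=1..T. omega2 n w s)"
  unfolding omega2_def using assms by (intro sum_mono sum_mono2) auto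

lemma upper_triangular_dominates:
  assumes "\<And>k l. l < k \<Longrightarrow> w k l = 0"
  shows "dominates n (omega2 n w) (omega1 n w)"
  unfolding dominates_def
  using sum_omega1_upper_triangular[OF assms] sum_corner_le_sum_omega2 by auto

lemma Lambda1_sdominates:
  assumes "w \<in> Lambda1 n r"
  shows "sdominates n (omega2 n w) (omega1 n w)"
proof -
  have tri: "\<And>k l. l < k \<Longrightarrow> w k l = 0"
    and pos: "(\<Sum>k=1..n. \<Sum>l=1..n. if k \<le> l then (l - k) * w k l else 0) \<ge> 1"
    using assms unfolding Lambda1_def by auto
  obtain k l where kl: "k \<in> {1..n}" "l \<in> {1..n}" "k < l" "w k l > 0"
  proof (rule ccontr)
    assume "\<not> thesis"
    hence "(\<Sum>k=1..n. \<Sum>l=1..n. if k \<le> l then (l - k) * w k l else 0) = 0"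
      using that by (intro sum.neutral ballI) (auto simp: le_less)
    thus False using pos by simp
  qed
  \<comment> \<open>row \<open>k\<close> has mass in column \<open>l > k\<close>, outside the \<open>k \<times> k\<close> corner\<close>
  have "(\<Sum>s=1..k. \<Sum>t=1..k. w s t) < (\<Sum>s=1..k. omega2 n w s)"
    unfolding omega2_def
  proof (rule sum_strict_mono_ex1)
    show "\<forall>s\<in>{1..k}. (\<Sum>t=1..k. w s t) \<le> (\<Sum>t=1..n. w s t)"
      using kl by (auto intro!: sum_mono2)
    have "(\<Sum>t=1..k. w k t) < (\<Sum>t\<in>insert l {1..k}. w k t)" using kl by simp
    also have "\<dots> \<le> (\<Sum>t=1..n. w k t)" using kl by (intro sum_mono2) auto
    finally show "\<exists>s\<in>{1..k}. (\<Sum>t=1..k. w s t) < (\<Sum>t=1..n. w s t)" using kl by auto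
  qed simp
  hence "omega2 n w \<noteq> omega1 n w"
    using sum_omega1_upper_triangular[OF tri, where T=k] kl by auto
  thus ?thesis using upper_triangular_dominates[OF tri] unfolding sdominates_def by simp
qed

lemma wt_self: "wt i i = diagm (content i)"
  unfolding wt_def diagm_def content_def by (intro ext) auto

lemma wt_eq_diagm_imp_eq:
  assumes "wt i j = diagm l" "length i = length j"
  shows "i = j"
proof (rule nth_equalityI)
  fix q assume q: "q < length i"
  show "i ! q = j ! q"
  proof (rule ccontr)
    assume ne: "i ! q \<noteq> j ! q"
    have "q \<in> {p. p < length i \<and> i ! p = i ! q \<and> j ! p = j ! q}" using q by simp
    hence "wt i j (i ! q) (j ! q) \<noteq> 0" unfolding wt_def by (auto simp: card_eq_0_iff)
    thus False using assms(1) ne by (simp add: diagm_def)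
  qed
qed (use assms in simp)

lemma xil_apply:
  "xil n r l i j = (if i \<in> Iset n r \<and> content i = l \<and> j = i then 1 else 0)"
proof -
  have "i \<in> Iset n r \<and> j \<in> Iset n r \<and> wt i j = diagm l \<longleftrightarrow> i \<in> Iset n r \<and> content i = l \<and> j = i"
  proof
    assume ij: "i \<in> Iset n r \<and> j \<in> Iset n r \<and> wt i j = diagm l"
    hence "j = i" using wt_eq_diagm_imp_eq[of i j l] by (simp add: Iset_def)
    hence diag: "diagm (content i) = diagm l" using ij wt_self[of i] by simp
    have "content i s = l s" for s
      using fun_cong[OF fun_cong[OF diag, of s], of s] by (simp add: diagm_def)
    thus "i \<in> Iset n r \<and> content i = l \<and> j = i" using ij \<open>j = i\<close> by auto
  qed (auto simp: wt_self)
  thus ?thesis unfolding xil_def xi_def by simp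
qed

lemma mmul_xil_left:
  "mmul n r (xil n r l) x = (\<lambda>i k. if i \<in> Iset n r \<and> content i = l then x i k else 0)"
proof (intro ext)
  fix i k
  have "mmul n r (xil n r l) x i k =
        (\<Sum>j\<in>Iset n r. if j = i then (if i \<in> Iset n r \<and> content i = l then x i k else 0) else 0)"
    unfolding mmul_def xil_apply by (intro sum.cong) auto
  thus "mmul n r (xil n r l) x i k = (if i \<in> Iset n r \<and> content i = l then x i k else 0)"
    using finite_Iset by simp
qed

lemma mmul_xil_right:
  "mmul n r x (xil n r l) = (\<lambda>i k. if k \<in> Iset n r \<and> content k = l then x i k else 0)"
proof (intro ext)
  fix i k
  have "mmul n r x (xil n r l) i k =
        (\<Sum>j\<in>Iset n r. if j = k then (if k \<in> Iset n r \<and> content k = l then x i k else 0) else 0)"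
    unfolding mmul_def xil_apply by (intro sum.cong) auto
  thus "mmul n r x (xil n r l) i k = (if k \<in> Iset n r \<and> content k = l then x i k else 0)"
    using finite_Iset by simp
qed

lemma lincomb_xi_apply:
  assumes "finite S"
  shows "(\<Sum>w\<in>S. c w * xi n r w i j) =
         (if i \<in> Iset n r \<and> j \<in> Iset n r \<and> wt i j \<in> S then c (wt i j) else 0)"
proof -
  have "(\<Sum>w\<in>S. c w * xi n r w i j) =
        (\<Sum>w\<in>S. if wt i j = w then (if i \<in> Iset n r \<and> j \<in> Iset n r then c w else 0) else 0)"
    unfolding xi_def by (intro sum.cong) auto
  thus ?thesis using assms by simp
qed

lemma xi_eq_lincomb:
  assumes "finite S" "w \<in> S"
  shows "xi n r w = (\<lambda>i j. \<Sum>v\<in>S. (if v = w then 1 else 0) * xi n r v i j)"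
  unfolding lincomb_xi_apply[OF assms(1)] using assms(2) by (intro ext) (auto simp: xi_def)

lemma sandwich_lincomb_xi:
  assumes "finite S"
  shows "mmul n r (mmul n r (xil n r \<nu>) (\<lambda>i j. \<Sum>w\<in>S. c w * xi n r w i j)) (xil n r \<mu>) =
         (\<lambda>i j. \<Sum>w\<in>{w \<in> S. omega1 n w = \<mu> \<and> omega2 n w = \<nu>}. c w * xi n r w i j)"
    (is "_ = (\<lambda>i j. \<Sum>w\<in>?X. _)")
proof (intro ext)
  fix i j
  have "finite ?X" using assms by simp
  moreover have "i \<in> Iset n r \<and> j \<in> Iset n r \<Longrightarrow>
      wt i j \<in> ?X \<longleftrightarrow> wt i j \<in> S \<and> content i = \<nu> \<and> content j = \<mu>"
    using omega1_wt[of i n r j] omega2_wt[of i n r j] by auto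
  ultimately show "mmul n r (mmul n r (xil n r \<nu>) (\<lambda>i j. \<Sum>w\<in>S. c w * xi n r w i j)) (xil n r \<mu>) i j =
        (\<Sum>w\<in>?X. c w * xi n r w i j)"
    unfolding mmul_xil_left mmul_xil_right lincomb_xi_apply[OF assms]
    by (simp only: lincomb_xi_apply) auto
qed

lemma lincomb_xi_eq_0_imp_coeff_eq_0:
  assumes "finite S" "S \<subseteq> mats n r" "(\<lambda>i j. \<Sum>w\<in>S. c w * xi n r w i j) = (\<lambda>i j. 0)" "w \<in> S"
  shows "c w = 0"
proof -
  obtain i j where "i \<in> Iset n r" "j \<in> Iset n r" "wt i j = w"
    using wt_surj_mats assms(2,4) by blast
  thus ?thesis using fun_cong[OF fun_cong[OF assms(3)], of i j] assms(1,4)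
    by (simp add: lincomb_xi_apply)
qed

lemma is_basis_xi_span:
  assumes "finite S" "S \<subseteq> mats n r"
  shows "is_basis S (xi n r) (xi_span n r S :: 'a::comm_ring_1 smat set)"
  unfolding is_basis_def
proof (intro conjI)
  show "\<forall>w\<in>S. (xi n r w :: 'a smat) \<in> xi_span n r S"
  proof
    fix w assume "w \<in> S"
    show "(xi n r w :: 'a smat) \<in> xi_span n r S"
      unfolding xi_span_def mem_Collect_eq by (intro exI) (rule xi_eq_lincomb[OF assms(1) \<open>w \<in> S\<close>])
  qed
  show "\<forall>c. (\<lambda>i j. \<Sum>w\<in>S. c w * (xi n r w i j :: 'a)) = (\<lambda>i j. 0) \<longrightarrow> (\<forall>w\<in>S. c w = 0)"
    using lincomb_xi_eq_0_imp_coeff_eq_0[OF assms] by blast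
  show "\<forall>x\<in>xi_span n r S. \<exists>c. x = (\<lambda>i j. \<Sum>w\<in>S. c w * (xi n r w i j :: 'a))"
    unfolding xi_span_def by blast
qed

lemma sandwich_xi_span:
  assumes "finite S"
  shows "{mmul n r (mmul n r (xil n r \<nu>) x) (xil n r \<mu>) | x :: 'a::comm_ring_1 smat. x \<in> xi_span n r S}
       = xi_span n r {w \<in> S. omega1 n w = \<mu> \<and> omega2 n w = \<nu>}"
proof (intro equalityI subsetI)
  fix y assume "y \<in> {mmul n r (mmul n r (xil n r \<nu>) x) (xil n r \<mu>) | x :: 'a smat. x \<in> xi_span n r S}"
  then obtain c where "y = mmul n r (mmul n r (xil n r \<nu>) (\<lambda>i j. \<Sum>w\<in>S. c w * xi n r w i j)) (xil n r \<mu>)"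
    unfolding xi_span_def by blast
  thus "y \<in> xi_span n r {w \<in> S. omega1 n w = \<mu> \<and> omega2 n w = \<nu>}"
    unfolding sandwich_lincomb_xi[OF assms] xi_span_def by blast
next
  fix y :: "'a smat" assume "y \<in> xi_span n r {w \<in> S. omega1 n w = \<mu> \<and> omega2 n w = \<nu>}"
  then obtain c where "y = mmul n r (mmul n r (xil n r \<nu>) (\<lambda>i j. \<Sum>w\<in>S. c w * xi n r w i j)) (xil n r \<mu>)"
    unfolding sandwich_lincomb_xi[OF assms] xi_span_def by blast
  moreover have "(\<lambda>i j. \<Sum>w\<in>S. c w * xi n r w i j) \<in> xi_span n r S" unfolding xi_span_def by blast
  ultimately show "y \<in> {mmul n r (mmul n r (xil n r \<nu>) x) (xil n r \<mu>) | x :: 'a smat. x \<in> xi_span n r S}"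
    by blast
qed

lemma xi_span_empty: "xi_span n r {} = {\<lambda>i j. 0}"
  unfolding xi_span_def by simp

theorem proposition4p4:
  fixes n r :: nat and \<nu> \<mu> :: "nat \<Rightarrow> nat"
  assumes "0 < n" and "0 < r" and "\<nu> \<in> comps n r" and "\<mu> \<in> comps n r"
  shows "(\<not> sdominates n \<nu> \<mu> \<longrightarrow>
            (\<forall>x \<in> (Jset n r :: 'a::comm_ring_1 smat set).
               mmul n r (mmul n r (xil n r \<nu>) x) (xil n r \<mu>) = (\<lambda>i j. 0)))
       \<and> (sdominates n \<nu> \<mu> \<longrightarrow>
            is_basis {w \<in> Lambda1 n r. omega1 n w = \<mu> \<and> omega2 n w = \<nu>}
              (xi n r)
              {mmul n r (mmul n r (xil n r \<nu>) x) (xil n r \<mu>) | x :: 'a smat. x \<in> Jset n r})"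
proof -
  let ?X = "{w \<in> Lambda1 n r. omega1 n w = \<mu> \<and> omega2 n w = \<nu>}"
  have sandwich_J: "{mmul n r (mmul n r (xil n r \<nu>) x) (xil n r \<mu>) | x :: 'a smat. x \<in> Jset n r}
      = xi_span n r ?X"
    unfolding Jset_eq_xi_span using sandwich_xi_span[OF finite_Lambda1] .
  have vanishing: "mmul n r (mmul n r (xil n r \<nu>) x) (xil n r \<mu>) = (\<lambda>i j. 0)"
    if "\<not> sdominates n \<nu> \<mu>" "x \<in> Jset n r" for x :: "'a smat"
  proof -
    have no_terms: "?X = {}" using that(1) Lambda1_sdominates by blast
    have "xi_span n r ?X = {\<lambda>i j. 0 :: 'a}" unfolding no_terms by (rule xi_span_empty)
    thus ?thesis using that(2) unfolding sandwich_J[symmetric] by blast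
  qed
  have "finite ?X" using finite_Lambda1[of n r] by simp
  moreover have "?X \<subseteq> mats n r" by (auto simp: Lambda1_def)
  ultimately
  have "is_basis ?X (xi n r) (xi_span n r ?X :: 'a smat set)" by (rule is_basis_xi_span)
  with vanishing show ?thesis unfolding sandwich_J by blast
qed

end
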